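(* Let $S\subseteq[0,1]$ be the Smith–Volterra–Cantor set $\mathrm{SVC}(4)$ and let $f\colon[0,1]\to\mathbb{R}$ be the function defined from it as in the context. Then $f$ is not differentiable at any point of $S$.
   Context: Construction of $S$: let $S_0=[0,1]$. If $S_{n-1}=\bigcup_k[a_k,b_k]$ (finite disjoint union of closed "component intervals") for $n\geqslant1$, put $S_n=\bigcup_k\left(\left[a_k,\frac{a_k+b_k}{2}-\frac{1}{2^{2n+1}}\right]\cup\left[\frac{a_k+b_k}{2}+\frac{1}{2^{2n+1}},b_k\right]\right)$, i.e. an open interval of length $1/4^n$ centred at the midpoint is removed from each component interval. Let $S=\bigcap_{n\in\mathbb{N}}S_n$. The set $[0,1]\setminus S$ is a countable disjoint union of open intervals (the contiguous intervals of $S$); let $\{(a_n,b_n)\}_{n\in\mathbb{N}}$ be an enumeration of them and $c_n=(a_n+b_n)/2$. Define $f\colon[0,1]\to\mathbb{R}$ by $f=0$ on $S$, and on $(a_n,b_n)$: $f(x)=(x-a_n)^{1/4}\sin\big((x-a_n)^{-7/4}\big)$ for $a_n<x\leqslant c_n$, and $f(x)=(b_n-x)^{1/4}\sin\big((b_n-x)^{-7/4}\big)$ for $c_n\leqslant x<b_n$. (At the points $0,1$ differentiability is understood one-sidedly.) *)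

theory Defs
  imports "HOL-Analysis.Analysis"
begin

text \<open>Component intervals of S_n, as a list of pairs (a,b) standing for [a,b].
  Step n (n \<ge> 1) removes from each [a,b] the open interval of length 1/4^n
  centred at the midpoint.\<close>

definition svc_split :: "nat \<Rightarrow> real \<times> real \<Rightarrow> (real \<times> real) list" where
  "svc_split n ab = (case ab of (a, b) \<Rightarrow>
      [(a, (a + b) / 2 - 1 / 2 ^ (2 * n + 1)), ((a + b) / 2 + 1 / 2 ^ (2 * n + 1), b)])"

fun svc_intervals :: "nat \<Rightarrow> (real \<times> real) list" where
  "svc_intervals 0 = [(0, 1)]"
| "svc_intervals (Suc n) = concat (map (svc_split (Suc n)) (svc_intervals n))"

definition svc_level :: "nat \<Rightarrow> real set" where
  "svc_level n = (\<Union>(a, b) \<in> set (svc_intervals n). {a..b})"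

definition SVC :: "real set" where
  "SVC = (\<Inter>n. svc_level n)"

definition svc_f :: "real \<Rightarrow> real" where
  "svc_f x = (if x \<in> SVC then 0 else
     (let C = connected_component_set ({0..1} - SVC) x;
          a = Inf C; b = Sup C in
      if x \<le> (a + b) / 2
      then (x - a) powr (1/4) * sin ((x - a) powr (-7/4))
      else (b - x) powr (1/4) * sin ((b - x) powr (-7/4))))"

end

theory Submission
  imports Defs
begin

text \<open>
  A point x of S lies in a component interval [p, q] of S_n, of length below 2^-n. The interval
  (a, b) removed from [p, q] at stage n + 1 has half-length e = 2^(-2n-3) and is a contiguous
  interval of S, so f(a + t) = t^(1/4) sin (t^(-7/4)) for 0 < t \<le> e. At a peak of the sine
  with t \<ge> e/2 this gives a point y with |y - x| \<le> 2^-n \<le> 4 f(y)^2. Since f(x) = 0, such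
  square-root growth along points y \<rightarrow> x contradicts the bound |f(y) - f(x)| = O(|y - x|)
  implied by differentiability.
\<close>

lemma connected_component_set_eq_greaterThanLessThan:
  fixes U :: "real set"
  assumes "a \<notin> U" "b \<notin> U" "{a<..<b} \<subseteq> U" "z \<in> {a<..<b}"
  shows "connected_component_set U z = {a<..<b}"
proof
  show "{a<..<b} \<subseteq> connected_component_set U z"
    using assms by (intro connected_component_maximal) auto
  show "connected_component_set U z \<subseteq> {a<..<b}"
  proof
    fix w
    assume w: "w \<in> connected_component_set U z"
    have between: "y \<in> connected_component_set U z"
      if "x \<in> connected_component_set U z" "x' \<in> connected_component_set U z" "x \<le> y" "y \<le> x'"
      for x x' y
      using that connected_connected_component[of U z] unfolding connected_iff_interval by blast
    have "z \<in> connected_component_set U z"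
      using assms(3,4) by auto
    moreover have "a \<notin> connected_component_set U z" "b \<notin> connected_component_set U z"
      using assms(1,2) connected_component_subset by blast+
    ultimately show "w \<in> {a<..<b}"
      using w assms(4) between[of w z a] between[of z w b] by force
  qed
qed

lemma exists_sin_eq_1_between: "\<exists>s. u \<le> s \<and> s \<le> u + 2 * pi \<and> sin s = 1"
proof -
  define v where "v = u / pi"
  define n where "n = \<lceil>(v - 1 / 2) / 2\<rceil>"
  define s where "s = (2 * real_of_int n + 1 / 2) * pi"
  have "(v - 1 / 2) / 2 \<le> n" "n \<le> (v - 1 / 2) / 2 + 1"
    unfolding n_def by (rule le_of_int_ceiling, rule of_int_ceiling_le_add_one)
  then have "v \<le> 2 * real_of_int n + 1 / 2" "2 * real_of_int n + 1 / 2 \<le> v + 2"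
    by (simp_all add: field_simps)
  then have "v * pi \<le> s" "s \<le> (v + 2) * pi"
    unfolding s_def by (simp_all add: mult_right_mono)
  moreover have "u = v * pi"
    by (simp add: v_def)
  moreover have "sin s = 1"
    unfolding sin_eq_1 s_def by (intro exI[of _ n]) simp
  ultimately show ?thesis
    by (auto simp: distrib_right)
qed

lemma exists_sin_powr_eq_1:
  fixes \<alpha> d :: real
  assumes "1 \<le> \<alpha>" "0 < d" "d \<le> 1 / 8"
  shows "\<exists>t\<in>{d / 2..d}. sin (t powr - \<alpha>) = 1"
proof -
  define u where "u = d powr - \<alpha>"
  have "8 \<le> d powr - 1"
    using assms(2,3) by (simp add: powr_minus_divide field_simps)
  also have "d powr - 1 \<le> u"
    unfolding u_def using assms by (intro powr_mono') auto
  finally have "8 \<le> u" .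
  obtain s where s: "u \<le> s" "s \<le> u + 2 * pi" "sin s = 1"
    using exists_sin_eq_1_between by blast
  have "0 < u" "s \<le> 2 * u"
    \<comment> \<open>this is where d \<le> 1/8 is used: u \<ge> 8 > 2 pi\<close>
    using \<open>8 \<le> u\<close> s(2) pi_less_4 by linarith+
  define t where "t = s powr (- 1 / \<alpha>)"
  have "t powr - \<alpha> = s"
    unfolding t_def powr_powr using assms(1) \<open>0 < u\<close> s(1) by simp
  moreover have "t \<le> u powr (- 1 / \<alpha>)"
    unfolding t_def using assms(1) \<open>0 < u\<close> s(1) by (intro powr_mono2') auto
  moreover have "u powr (- 1 / \<alpha>) = d"
    unfolding u_def powr_powr using assms(1,2) by simp
  moreover have "d / 2 \<le> t"
  proof -
    have "d / 2 = 2 powr - 1 * d"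
      by (simp add: powr_minus_divide)
    also have "\<dots> \<le> 2 powr (- 1 / \<alpha>) * d"
      using assms(1,2) by (intro mult_right_mono powr_mono) (auto simp: field_simps)
    also have "\<dots> = (2 * u) powr (- 1 / \<alpha>)"
      unfolding powr_mult u_def powr_powr using assms(1,2) by simp
    also have "\<dots> \<le> t"
      unfolding t_def using assms(1) \<open>0 < u\<close> s(1) \<open>s \<le> 2 * u\<close> by (intro powr_mono2') auto
    finally show ?thesis .
  qed
  ultimately show ?thesis
    using s(3) by auto
qed

lemma not_differentiable_within_if_sqrt_growth:
  fixes f :: "real \<Rightarrow> real"
  assumes "\<And>\<epsilon>. 0 < \<epsilon> \<Longrightarrow> \<exists>y\<in>S. y \<noteq> x \<and> \<bar>y - x\<bar> < \<epsilon> \<and> \<bar>y - x\<bar> \<le> c * (f y - f x)\<^sup>2"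
  shows "\<not> f differentiable (at x within S)"
proof
  assume "f differentiable (at x within S)"
  then obtain D where "(f has_derivative (\<lambda>h. D * h)) (at x within S)"
    unfolding real_differentiable_def has_field_derivative_def by blast
  then obtain r where "0 < r"
    and r: "\<And>y. y \<in> S \<Longrightarrow> \<bar>y - x\<bar> < r \<Longrightarrow> \<bar>f y - f x - D * (y - x)\<bar> \<le> \<bar>y - x\<bar>"
    unfolding has_derivative_within_alt by (metis real_norm_def mult_1 zero_less_one)
  define C where "C = \<bar>D\<bar> + 1"
  have lipschitz: "\<bar>f y - f x\<bar> \<le> C * \<bar>y - x\<bar>" if "y \<in> S" "\<bar>y - x\<bar> < r" for y
    using r[OF that] abs_triangle_ineq[of "f y - f x - D * (y - x)" "D * (y - x)"]
    by (simp add: C_def abs_mult distrib_right)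
  define \<epsilon> where "\<epsilon> = min r (1 / (\<bar>c\<bar> * C\<^sup>2 + 1))"
  have "0 < \<epsilon>"
    using \<open>0 < r\<close> by (simp add: \<epsilon>_def add_nonneg_pos)
  then obtain y where y: "y \<in> S" "y \<noteq> x" "\<bar>y - x\<bar> < \<epsilon>" "\<bar>y - x\<bar> \<le> c * (f y - f x)\<^sup>2"
    using assms by blast
  define h where "h = \<bar>y - x\<bar>"
  have "0 < h" "h < r" "h * (\<bar>c\<bar> * C\<^sup>2 + 1) < 1"
    using y(2,3) by (auto simp: h_def \<epsilon>_def pos_less_divide_eq add_nonneg_pos)
  have "h \<le> \<bar>c\<bar> * (f y - f x)\<^sup>2"
    using y(4) abs_ge_self[of c] zero_le_power2[of "f y - f x"] unfolding h_def
    by (meson mult_right_mono order_trans)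
  also have "\<dots> \<le> \<bar>c\<bar> * (C * h)\<^sup>2"
    using lipschitz[OF y(1)] \<open>h < r\<close> unfolding h_def
    by (intro mult_left_mono) (auto simp: abs_le_square_iff[symmetric] C_def)
  finally have "1 \<le> \<bar>c\<bar> * C\<^sup>2 * h"
    using \<open>0 < h\<close> by (simp add: power2_eq_square algebra_simps)
  with \<open>h * (\<bar>c\<bar> * C\<^sup>2 + 1) < 1\<close> \<open>0 < h\<close> show False
    by (simp add: algebra_simps)
qed

definition svc_width :: "nat \<Rightarrow> real" where
  "svc_width n = (1 / 2 ^ n + 1 / 4 ^ n) / 2"

lemma svc_width_pos: "0 < svc_width n"
  by (simp add: svc_width_def add_pos_pos)

lemma svc_width_le: "svc_width n \<le> 1 / 2 ^ n"
proof -
  have "(2::real) ^ n \<le> 4 ^ n"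
    by (rule power_mono) auto
  then have "1 / 4 ^ n \<le> (1::real) / 2 ^ n"
    by (simp add: frac_le)
  then show ?thesis
    unfolding svc_width_def by simp
qed

lemma svc_width_Suc: "svc_width (Suc n) = svc_width n / 2 - 1 / 2 ^ (2 * Suc n + 1)"
proof -
  have "(2::real) ^ (2 * Suc n + 1) = 8 * (2 ^ n * 2 ^ n)" and "(4::real) ^ n = 2 ^ n * 2 ^ n"
    by (simp_all add: power_add power_mult flip: power_mult_distrib)
  then show ?thesis
    by (simp add: svc_width_def field_simps)
qed

lemma mem_svc_split_iff:
  "(c, d) \<in> set (svc_split k (p, q)) \<longleftrightarrow>
     c = p \<and> d = (p + q) / 2 - 1 / 2 ^ (2 * k + 1) \<or> c = (p + q) / 2 + 1 / 2 ^ (2 * k + 1) \<and> d = q"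
  by (auto simp: svc_split_def)

lemma svc_split_subset_width:
  assumes "(c, d) \<in> set (svc_split (Suc n) (p, q))" and "q - p = svc_width n"
  shows "p \<le> c" "d \<le> q" "d - c = svc_width (Suc n)"
proof -
  define e :: real where "e = 1 / 2 ^ (2 * Suc n + 1)"
  have "c = p \<and> d = (p + q) / 2 - e \<or> c = (p + q) / 2 + e \<and> d = q"
    using assms(1) by (simp add: mem_svc_split_iff e_def)
  moreover have "0 < e" "svc_width (Suc n) = svc_width n / 2 - e"
    by (simp_all add: e_def svc_width_Suc)
  moreover note svc_width_pos[of "Suc n"]
  ultimately show "p \<le> c" "d \<le> q" "d - c = svc_width (Suc n)"
    using assms(2) by (auto simp: field_simps)
qed

lemma svc_intervals_width: "(a, b) \<in> set (svc_intervals n) \<Longrightarrow> b - a = svc_width n"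
proof (induction n arbitrary: a b)
  case 0
  then show ?case by (simp add: svc_width_def)
next
  case (Suc n)
  then obtain p q where "(p, q) \<in> set (svc_intervals n)" "(a, b) \<in> set (svc_split (Suc n) (p, q))"
    by auto
  with Suc.IH svc_split_subset_width show ?case by blast
qed

lemma svc_intervals_less:
  assumes "(a, b) \<in> set (svc_intervals n)"
  shows "a < b"
  using svc_intervals_width[OF assms] svc_width_pos[of n] by linarith

lemma svc_intervals_Suc_subset:
  assumes "(c, d) \<in> set (svc_intervals (Suc n))"
  obtains p q where "(p, q) \<in> set (svc_intervals n)" "p \<le> c" "d \<le> q"
  using assms svc_split_subset_width svc_intervals_width by fastforce

lemma sorted_svc_intervals: "sorted_wrt (\<lambda>I J. snd I < fst J) (svc_intervals n)"
proof (induction n)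
  case 0
  then show ?case by simp
next
  case (Suc n)
  have "sorted_wrt (\<lambda>I J. snd I < fst J) (concat (map (svc_split (Suc n)) xs))"
    if "sorted_wrt (\<lambda>I J. snd I < fst J) xs" and "set xs \<subseteq> set (svc_intervals n)" for xs
    using that
  proof (induction xs)
    case Nil
    then show ?case by simp
  next
    case (Cons pq xs)
    obtain p q where pq: "pq = (p, q)" and width: "q - p = svc_width n"
      using Cons.prems(2) svc_intervals_width by (cases pq) auto
    have "d < c'"
      if "(c, d) \<in> set (svc_split (Suc n) (p, q))" and "(p', q') \<in> set xs"
        and "(c', d') \<in> set (svc_split (Suc n) (p', q'))" for c d p' q' c' d'
    proof -
      have "d \<le> q" using that(1) width by (rule svc_split_subset_width)
      also have "q < p'" using Cons.prems(1) that(2) pq by auto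
      also have "p' \<le> c'"
        using that(2,3) Cons.prems(2) svc_split_subset_width svc_intervals_width by fastforce
      finally show ?thesis .
    qed
    moreover have "sorted_wrt (\<lambda>I J. snd I < fst J) (svc_split (Suc n) (p, q))"
      using width svc_width_pos[of "Suc n"] by (auto simp: svc_split_def svc_width_Suc)
    ultimately show ?case
      using Cons by (fastforce simp: pq sorted_wrt_append)
  qed
  with Suc.IH show ?case by simp
qed

lemma svc_intervals_separated:
  assumes "I \<in> set (svc_intervals n)" "J \<in> set (svc_intervals n)" "I \<noteq> J"
  shows "snd I < fst J \<or> snd J < fst I"
proof -
  have "sorted_wrt P xs \<Longrightarrow> I \<in> set xs \<Longrightarrow> J \<in> set xs \<Longrightarrow> P I J \<or> P J I" for P xs
    using assms(3) by (induction xs) auto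
  with sorted_svc_intervals assms(1,2) show ?thesis by blast
qed

lemma mem_svc_level_iff:
  "x \<in> svc_level n \<longleftrightarrow> (\<exists>a b. (a, b) \<in> set (svc_intervals n) \<and> a \<le> x \<and> x \<le> b)"
  unfolding svc_level_def by force

lemma svc_intervals_subset_svc_level:
  "(a, b) \<in> set (svc_intervals n) \<Longrightarrow> {a..b} \<subseteq> svc_level n"
  unfolding svc_level_def by blast

lemma svc_level_0: "svc_level 0 = {0..1}"
  by (simp add: svc_level_def)

lemma decseq_svc_level: "decseq svc_level"
proof (rule decseq_SucI, rule subsetI)
  fix x n
  assume "x \<in> svc_level (Suc n)"
  then obtain c d where "(c, d) \<in> set (svc_intervals (Suc n))" "c \<le> x" "x \<le> d"
    by (auto simp: mem_svc_level_iff)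
  then show "x \<in> svc_level n"
    by (metis svc_intervals_Suc_subset mem_svc_level_iff order_trans)
qed

lemma SVC_subset_svc_level: "SVC \<subseteq> svc_level n"
  by (auto simp: SVC_def)

lemma svc_intervals_Suc_halves:
  assumes "(p, q) \<in> set (svc_intervals n)"
  shows "(p, (p + q) / 2 - 1 / 2 ^ (2 * Suc n + 1)) \<in> set (svc_intervals (Suc n))"
    and "((p + q) / 2 + 1 / 2 ^ (2 * Suc n + 1), q) \<in> set (svc_intervals (Suc n))"
  using assms by (auto simp: svc_split_def simp del: power_Suc intro!: bexI[OF _ assms])

lemma svc_intervals_endpoints_persist:
  assumes "(a, b) \<in> set (svc_intervals n)"
  shows "(\<exists>d. (a, d) \<in> set (svc_intervals (n + k))) \<and> (\<exists>c. (c, b) \<in> set (svc_intervals (n + k)))"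
proof (induction k)
  case 0
  then show ?case using assms by auto
next
  case (Suc k)
  then obtain c d where "(a, d) \<in> set (svc_intervals (n + k))" "(c, b) \<in> set (svc_intervals (n + k))"
    by blast
  then show ?case
    unfolding add_Suc_right using svc_intervals_Suc_halves by blast
qed

lemma svc_intervals_endpoints_in_SVC:
  assumes ab: "(a, b) \<in> set (svc_intervals n)"
  shows "a \<in> SVC" "b \<in> SVC"
proof -
  have "a \<in> svc_level j \<and> b \<in> svc_level j" for j
  proof (cases "n \<le> j")
    case True
    then obtain c d where "(a, d) \<in> set (svc_intervals j)" "(c, b) \<in> set (svc_intervals j)"
      using svc_intervals_endpoints_persist[OF ab, of "j - n"] by auto
    then have "a \<in> {a..d}" "b \<in> {c..b}" "{a..d} \<union> {c..b} \<subseteq> svc_level j"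
      using svc_intervals_less svc_intervals_subset_svc_level by fastforce+
    then show ?thesis
      by blast
  next
    case False
    have "a \<in> svc_level n \<and> b \<in> svc_level n"
      using svc_intervals_less[OF ab] svc_intervals_subset_svc_level[OF ab] by auto
    with False decseqD[OF decseq_svc_level, of j n] show ?thesis by auto
  qed
  then show "a \<in> SVC" "b \<in> SVC"
    by (auto simp: SVC_def)
qed

lemma svc_middle_gap:
  assumes pq: "(p, q) \<in> set (svc_intervals n)"
  defines "a \<equiv> (p + q) / 2 - 1 / 2 ^ (2 * Suc n + 1)"
    and "b \<equiv> (p + q) / 2 + 1 / 2 ^ (2 * Suc n + 1)"
  shows "p \<le> a" "b \<le> q" "a \<in> SVC" "b \<in> SVC" "{a<..<b} \<subseteq> {0..1} - SVC"
proof -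
  have pa: "(p, a) \<in> set (svc_intervals (Suc n))" and bq: "(b, q) \<in> set (svc_intervals (Suc n))"
    using svc_intervals_Suc_halves[OF pq] by (simp_all add: a_def b_def)
  with svc_intervals_less show "p \<le> a" "b \<le> q"
    by (meson less_imp_le)+
  show "a \<in> SVC" "b \<in> SVC"
    using svc_intervals_endpoints_in_SVC pa bq by blast+
  have "z \<notin> svc_level (Suc n)" if z: "z \<in> {a<..<b}" for z
  proof
    assume "z \<in> svc_level (Suc n)"
    then obtain p' q' c d where p'q': "(p', q') \<in> set (svc_intervals n)"
      and cd: "(c, d) \<in> set (svc_split (Suc n) (p', q'))" "c \<le> z" "z \<le> d"
      by (auto simp: mem_svc_level_iff)
    show False
    proof (cases "(p', q') = (p, q)")
      case True
      with cd z show False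
        by (auto simp: mem_svc_split_iff a_def b_def)
    next
      case False
      with svc_intervals_separated[OF pq p'q'] have "q' < p \<or> q < p'"
        by auto
      moreover have "p' \<le> c" "d \<le> q'"
        using svc_split_subset_width cd p'q' svc_intervals_width by blast+
      ultimately show False
        using cd z \<open>p \<le> a\<close> \<open>b \<le> q\<close> by auto
    qed
  qed
  moreover have "{p..q} \<subseteq> {0..1}"
    using svc_intervals_subset_svc_level[OF pq] decseqD[OF decseq_svc_level le0]
    unfolding svc_level_0 by (rule subset_trans)
  ultimately show "{a<..<b} \<subseteq> {0..1} - SVC"
    using SVC_subset_svc_level \<open>p \<le> a\<close> \<open>b \<le> q\<close> by fastforce
qed

lemma svc_f_on_gap:
  assumes "a \<in> SVC" "b \<in> SVC" "{a<..<b} \<subseteq> {0..1} - SVC" "z \<in> {a<..<b}" "z \<le> (a + b) / 2"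
  shows "svc_f z = (z - a) powr (1/4) * sin ((z - a) powr (-7/4))"
proof -
  have "connected_component_set ({0..1} - SVC) z = {a<..<b}"
    using assms(1-4) by (intro connected_component_set_eq_greaterThanLessThan) auto
  moreover have "a < b" "z \<notin> SVC"
    using assms(3,4) by auto
  ultimately show ?thesis
    using assms(5) by (simp add: svc_f_def Let_def)
qed

lemma svc_f_large_near_SVC:
  assumes "x \<in> SVC"
  obtains y where "y \<in> {0..1}" "y \<noteq> x" "\<bar>y - x\<bar> \<le> 1 / 2 ^ n" "\<bar>y - x\<bar> \<le> 4 * (svc_f y)\<^sup>2"
proof -
  have "x \<in> svc_level n"
    using assms SVC_subset_svc_level by blast
  then obtain p q where pq: "(p, q) \<in> set (svc_intervals n)" "p \<le> x" "x \<le> q"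
    by (auto simp: mem_svc_level_iff)
  define e :: real where "e = 1 / 2 ^ (2 * Suc n + 1)"
  define a where "a = (p + q) / 2 - e"
  define b where "b = (p + q) / 2 + e"
  have gap: "p \<le> a" "b \<le> q" "a \<in> SVC" "b \<in> SVC" "{a<..<b} \<subseteq> {0..1} - SVC"
    using svc_middle_gap[OF pq(1)] unfolding a_def b_def e_def by auto
  have four_pow: "(4::real) ^ n = (2 ^ n)\<^sup>2"
    by (simp add: power2_eq_square flip: power_mult_distrib)
  then have "0 < e" "e \<le> 1 / 8" and e_eq: "8 * e = 1 / 4 ^ n"
    by (simp_all add: e_def power_add power_mult mult.commute[of 2])
  then obtain t where t: "e / 2 \<le> t" "t \<le> e" "sin (t powr - (7 / 4)) = 1"
    using exists_sin_powr_eq_1[of "7 / 4" e] by auto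
  define y where "y = a + t"
  have "(a + b) / 2 = a + e" "b = a + 2 * e"
    by (simp_all add: a_def b_def)
  then have y_gap: "y \<in> {a<..<b}" "y \<le> (a + b) / 2"
    using t(1,2) \<open>0 < e\<close> by (auto simp: y_def)
  have "svc_f y = t powr (1 / 4)"
    using svc_f_on_gap[OF gap(3-5) y_gap] t(3) by (simp add: y_def)
  have "\<bar>y - x\<bar> \<le> 1 / 2 ^ n"
  proof -
    have "\<bar>y - x\<bar> \<le> q - p"
      using pq gap(1,2) y_gap by auto
    with svc_intervals_width[OF pq(1)] svc_width_le[of n] show ?thesis
      by linarith
  qed
  then have "\<bar>y - x\<bar>\<^sup>2 \<le> (1 / 2 ^ n)\<^sup>2"
    by (rule power_mono) simp
  also have "\<dots> = 1 / 4 ^ n"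
    by (simp add: four_pow power_divide)
  also have "\<dots> \<le> 16 * t"
    using t(1) e_eq by linarith
  also have "\<dots> = (4 * (svc_f y)\<^sup>2)\<^sup>2"
    using \<open>svc_f y = t powr (1 / 4)\<close> t(1) \<open>0 < e\<close>
    by (simp add: power_mult_distrib powr_power flip: power_mult)
  finally have "\<bar>y - x\<bar> \<le> 4 * (svc_f y)\<^sup>2"
    by (rule power2_le_imp_le) simp
  moreover have "y \<noteq> x" "y \<in> {0..1}"
    using assms y_gap(1) gap(5) by auto
  ultimately show ?thesis
    using that \<open>\<bar>y - x\<bar> \<le> 1 / 2 ^ n\<close> by blast
qed

theorem theorem4p4:
  shows "\<forall>x \<in> SVC. \<not> svc_f differentiable (at x within {0..1})"
proof
  fix x
  assume x: "x \<in> SVC"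
  show "\<not> svc_f differentiable (at x within {0..1})"
  proof (rule not_differentiable_within_if_sqrt_growth)
    fix \<epsilon> :: real
    assume "0 < \<epsilon>"
    then obtain n where "(1 / 2) ^ n < \<epsilon>"
      using real_arch_pow_inv[of \<epsilon> "1 / 2"] by auto
    moreover obtain y where "y \<in> {0..1}" "y \<noteq> x" "\<bar>y - x\<bar> \<le> 1 / 2 ^ n" "\<bar>y - x\<bar> \<le> 4 * (svc_f y)\<^sup>2"
      using svc_f_large_near_SVC[OF x] .
    moreover have "svc_f x = 0"
      using x by (simp add: svc_f_def)
    ultimately show "\<exists>y\<in>{0..1}. y \<noteq> x \<and> \<bar>y - x\<bar> < \<epsilon> \<and> \<bar>y - x\<bar> \<le> 4 * (svc_f y - svc_f x)\<^sup>2"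
      by (auto simp: power_one_over)
  qed
qed

end
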